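(* For every $(y,z)\in\mathbb{R}\times\mathbb{R}$, if $D(y,z)\geq0$ then $N(y,z)>D(y,z)$.
   Context: Fix constants $\mu\in\mathbb{R}$, $\kappa>0$, $\sigma>0$, $\rho>0$, $\beta>0$, $c\geq0$. Let $D_\alpha(x)=\frac{e^{-x^2/4}}{\Gamma(-\alpha)}\int_0^\infty t^{-\alpha-1}e^{-t^2/2-xt}dt$ ($\alpha<0$) and $\psi(x)=e^{\frac{\kappa(x-\mu)^2}{2\sigma^2}}D_{-\rho/\kappa}\big(-\frac{x-\mu}{\sigma}\sqrt{2\kappa}\big)$, the strictly increasing positive solution of $\frac{\sigma^2}{2}u''+\kappa(\mu-x)u'-\rho u=0$. Let $\tilde{R}(x,y)=\frac{\mu\kappa+\rho x-\beta(\rho+2\kappa)y}{\rho(\rho+\kappa)}$. For $k\geq0$, $Q_k(z)=\psi^{(k)}(z)\psi^{(k+2)}(z)-\psi^{(k+1)}(z)^2$, so $Q_0'(z)=\psi(z)\psi'''(z)-\psi'(z)\psi''(z)$. Define $D(y,z)=\psi(z)\big[(\rho+\kappa)(c-\tilde{R}(z,y))Q_1(z)+Q_0'(z)\big]$ and $N(y,z)=Q_0(z)\Big(\frac{\rho+2\kappa}{\rho}\psi'(z)+(\rho+\kappa)(c-\tilde{R}(z,y))\psi''(z)+\psi'(z)\Big)$. *)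

theory Defs
  imports "HOL-Analysis.Analysis"
begin

text \<open>Parabolic cylinder function D_alpha for alpha < 0, via its integral representation
(Lebesgue integral over the open half-line (0, infinity)).\<close>
definition parcyl :: "real \<Rightarrow> real \<Rightarrow> real" where
  "parcyl \<alpha> x = exp (- (x\<^sup>2) / 4) / Gamma (- \<alpha>) *
     (LINT t:{0<..}|lborel. t powr (- \<alpha> - 1) * exp (- (t\<^sup>2) / 2 - x * t))"

definition psi :: "real \<Rightarrow> real \<Rightarrow> real \<Rightarrow> real \<Rightarrow> real \<Rightarrow> real" where
  "psi \<mu> \<kappa> \<sigma> \<rho> x = exp (\<kappa> * (x - \<mu>)\<^sup>2 / (2 * \<sigma>\<^sup>2)) *
     parcyl (- \<rho> / \<kappa>) (- (x - \<mu>) / \<sigma> * sqrt (2 * \<kappa>))"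

definition psid :: "real \<Rightarrow> real \<Rightarrow> real \<Rightarrow> real \<Rightarrow> nat \<Rightarrow> real \<Rightarrow> real" where
  "psid \<mu> \<kappa> \<sigma> \<rho> k = (deriv ^^ k) (psi \<mu> \<kappa> \<sigma> \<rho>)"

definition Rt :: "real \<Rightarrow> real \<Rightarrow> real \<Rightarrow> real \<Rightarrow> real \<Rightarrow> real \<Rightarrow> real" where
  "Rt \<mu> \<kappa> \<rho> \<beta> x y = (\<mu> * \<kappa> + \<rho> * x - \<beta> * (\<rho> + 2 * \<kappa>) * y) / (\<rho> * (\<rho> + \<kappa>))"

definition Qk :: "real \<Rightarrow> real \<Rightarrow> real \<Rightarrow> real \<Rightarrow> nat \<Rightarrow> real \<Rightarrow> real" where
  "Qk \<mu> \<kappa> \<sigma> \<rho> k z = psid \<mu> \<kappa> \<sigma> \<rho> k z * psid \<mu> \<kappa> \<sigma> \<rho> (k + 2) z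
     - (psid \<mu> \<kappa> \<sigma> \<rho> (k + 1) z)\<^sup>2"

text \<open>Q_0'(z) = psi psi''' - psi' psi''.\<close>
definition Q0d :: "real \<Rightarrow> real \<Rightarrow> real \<Rightarrow> real \<Rightarrow> real \<Rightarrow> real" where
  "Q0d \<mu> \<kappa> \<sigma> \<rho> z = psid \<mu> \<kappa> \<sigma> \<rho> 0 z * psid \<mu> \<kappa> \<sigma> \<rho> 3 z
     - psid \<mu> \<kappa> \<sigma> \<rho> 1 z * psid \<mu> \<kappa> \<sigma> \<rho> 2 z"

definition DD :: "real \<Rightarrow> real \<Rightarrow> real \<Rightarrow> real \<Rightarrow> real \<Rightarrow> real \<Rightarrow> real \<Rightarrow> real \<Rightarrow> real" where
  "DD \<mu> \<kappa> \<sigma> \<rho> \<beta> c y z = psi \<mu> \<kappa> \<sigma> \<rho> z *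
     ((\<rho> + \<kappa>) * (c - Rt \<mu> \<kappa> \<rho> \<beta> z y) * Qk \<mu> \<kappa> \<sigma> \<rho> 1 z + Q0d \<mu> \<kappa> \<sigma> \<rho> z)"

definition NN :: "real \<Rightarrow> real \<Rightarrow> real \<Rightarrow> real \<Rightarrow> real \<Rightarrow> real \<Rightarrow> real \<Rightarrow> real \<Rightarrow> real" where
  "NN \<mu> \<kappa> \<sigma> \<rho> \<beta> c y z = Qk \<mu> \<kappa> \<sigma> \<rho> 0 z *
     ((\<rho> + 2 * \<kappa>) / \<rho> * psid \<mu> \<kappa> \<sigma> \<rho> 1 z
      + (\<rho> + \<kappa>) * (c - Rt \<mu> \<kappa> \<rho> \<beta> z y) * psid \<mu> \<kappa> \<sigma> \<rho> 2 z
      + psid \<mu> \<kappa> \<sigma> \<rho> 1 z)"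

end

theory Submission
  imports Defs "HOL-Real_Asymp.Real_Asymp" "HOL-Computational_Algebra.Polynomial"
begin

(* By the integral representation of D_alpha, the n-th derivative of psi at z equals
   L^n / Gamma nu times the moment m_n = M (nu - 1 + n) s of the positive weight
   t^a exp (s t - t^2/2) on (0, infinity), where nu = rho/kappa, L = sqrt (2 kappa) / sigma
   and s = L (z - mu).  Integration by parts gives the three-term recurrence
   M (a + 1) s = s M a s + a M (a - 1) s, and since the m_n are moments of a positive
   measure, their Hankel determinants H2, H3 are positive.  Up to the positive factor
   (L / Gamma nu)^3, D = m_0 X with X = B H2(m_1..m_3) + m_0 m_3 - m_1 m_2, and by the
   recurrence H2(m_1..m_3) (N - D) = H2(m_0..m_2) H3(m_1..m_5) / nu + H3(m_0..m_4) X,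
   which is positive when X >= 0. *)

lemma abs_exp_minus_one_le: "\<bar>exp x - 1\<bar> \<le> \<bar>x\<bar> * exp \<bar>x\<bar>" for x :: real
proof (cases "x \<ge> 0")
  case True
  have "exp x * (1 - x) \<le> exp x * exp (-x)"
    using exp_ge_add_one_self[of "-x"] by (intro mult_left_mono) auto
  with True show ?thesis by (simp add: exp_minus algebra_simps)
next
  case False
  then have "\<bar>exp x - 1\<bar> \<le> \<bar>x\<bar>" using exp_ge_add_one_self[of x] by (simp; linarith)
  also have "\<dots> \<le> \<bar>x\<bar> * exp \<bar>x\<bar>" by (simp add: mult_le_cancel_left1)
  finally show ?thesis .
qed

lemma integral_pos_of_AE_pos:
  fixes f :: "'a \<Rightarrow> real"
  assumes "integrable M f" "AE x in M. 0 \<le> f x"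
    and "A \<in> sets M" "emeasure M A \<noteq> 0" "AE x in M. x \<in> A \<longrightarrow> 0 < f x"
  shows "0 < integral\<^sup>L M f"
proof -
  have "integral\<^sup>L M f \<noteq> 0"
  proof
    assume "integral\<^sup>L M f = 0"
    then have "AE x in M. f x = 0" using integral_nonneg_eq_0_iff_AE[OF assms(1,2)] by simp
    with assms(5) have "AE x in M. x \<notin> A" by eventually_elim auto
    then have "emeasure M A = 0"
      by (subst (asm) AE_iff_measurable[OF assms(3)]) (use sets.sets_into_space[OF assms(3)] in auto)
    with assms(4) show False ..
  qed
  with integral_nonneg_AE[OF assms(2)] show ?thesis by simp
qed

lemma has_real_derivative_lebesgue_integral:
  fixes f :: "real \<Rightarrow> 'a \<Rightarrow> real"
  assumes integrable: "\<And>x. integrable M (f x)"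
    and deriv: "\<And>t. ((\<lambda>x. f x t) has_real_derivative f' t) (at x\<^sub>0)"
    and dominating: "integrable M g"
    and Lipschitz: "\<And>t h. \<bar>h\<bar> \<le> 1 \<Longrightarrow> \<bar>f (x\<^sub>0 + h) t - f x\<^sub>0 t\<bar> \<le> \<bar>h\<bar> * g t"
  shows "((\<lambda>x. integral\<^sup>L M (f x)) has_real_derivative integral\<^sup>L M f') (at x\<^sub>0)"
  unfolding DERIV_def tendsto_at_iff_sequentially comp_def
proof (intro allI impI)
  fix X :: "nat \<Rightarrow> real"
  assume X_nonzero: "\<forall>i. X i \<in> UNIV - {0}" and X: "X \<longlonglongrightarrow> 0"
  have "eventually (\<lambda>n. \<bar>X n\<bar> < 1) sequentially"
    using tendsto_rabs_zero[OF X] by (rule order_tendstoD(2)) simp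
  then obtain N where N: "\<And>n. n \<ge> N \<Longrightarrow> \<bar>X n\<bar> < 1" by (auto simp: eventually_sequentially)
  define q where "q i t = (f (x\<^sub>0 + X (i + N)) t - f x\<^sub>0 t) / X (i + N)" for i t
  have q_lim: "(\<lambda>i. q i t) \<longlonglongrightarrow> f' t" for t
  proof -
    have "\<forall>Y. (\<forall>i. Y i \<in> UNIV - {0}) \<longrightarrow> Y \<longlonglongrightarrow> 0 \<longrightarrow>
        (\<lambda>i. (f (x\<^sub>0 + Y i) t - f x\<^sub>0 t) / Y i) \<longlonglongrightarrow> f' t"
      using deriv[of t] unfolding DERIV_def tendsto_at_iff_sequentially comp_def .
    moreover have "(\<lambda>i. X (i + N)) \<longlonglongrightarrow> 0" using X by (rule LIMSEQ_ignore_initial_segment)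
    ultimately show ?thesis using X_nonzero unfolding q_def by auto
  qed
  have q_measurable: "q i \<in> borel_measurable M" for i
    unfolding q_def using integrable by (intro borel_measurable_divide borel_measurable_diff) auto
  have "(\<lambda>i. integral\<^sup>L M (q i)) \<longlonglongrightarrow> integral\<^sup>L M f'"
  proof (rule integral_dominated_convergence[where w = g])
    show "f' \<in> borel_measurable M"
      using q_lim q_measurable by (rule borel_measurable_LIMSEQ_real)
    show "AE t in M. norm (q i t) \<le> g t" for i
    proof (intro AE_I2)
      fix t
      have "\<bar>f (x\<^sub>0 + X (i + N)) t - f x\<^sub>0 t\<bar> \<le> \<bar>X (i + N)\<bar> * g t"
        using N[of "i + N"] by (intro Lipschitz) simp
      then show "norm (q i t) \<le> g t" using X_nonzero unfolding q_def
        by (simp add: abs_divide divide_le_eq mult.commute)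
    qed
    show "integrable M g" by (rule dominating)
    show "q i \<in> borel_measurable M" for i by (rule q_measurable)
    show "AE t in M. (\<lambda>i. q i t) \<longlonglongrightarrow> f' t" using q_lim by simp
  qed
  moreover have "integral\<^sup>L M (q i) =
      (integral\<^sup>L M (f (x\<^sub>0 + X (i + N))) - integral\<^sup>L M (f x\<^sub>0)) / X (i + N)" for i
    unfolding q_def using integrable by (simp add: integral_diff)
  ultimately have "(\<lambda>i. (integral\<^sup>L M (f (x\<^sub>0 + X (i + N))) - integral\<^sup>L M (f x\<^sub>0)) / X (i + N))
      \<longlonglongrightarrow> integral\<^sup>L M f'"
    by simp
  then show "(\<lambda>i. (integral\<^sup>L M (f (x\<^sub>0 + X i)) - integral\<^sup>L M (f x\<^sub>0)) / X i)
      \<longlonglongrightarrow> integral\<^sup>L M f'"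
    by (rule LIMSEQ_offset)
qed

lemma set_integrable_powr_divide_exp:
  assumes "a > -1"
  shows "set_integrable lborel {0<..} (\<lambda>t::real. t powr a / exp t)"
proof -
  have "((\<lambda>t. t powr ((a + 1) - 1) / exp t) has_integral Gamma (a + 1)) {0..}"
    using Gamma_integral_real[of "a + 1"] assms by simp
  then have "(\<lambda>t::real. t powr a / exp t) integrable_on {0..}"
    by (auto simp: has_integral_integrable_integral)
  then have "(\<lambda>t::real. t powr a / exp t) integrable_on {0<..}"
    by (rule integrable_spike_set) (auto intro: negligible_subset[of "{0}"])
  then have "(\<lambda>t::real. t powr a / exp t) absolutely_integrable_on {0<..}"
    by (rule nonnegative_absolutely_integrable_1) auto
  then have "set_integrable lebesgue {0<..} (\<lambda>t::real. t powr a / exp t)"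
    by (simp add: absolutely_integrable_on_def)
  then show ?thesis
    unfolding set_integrable_def by (subst (asm) integrable_completion) auto
qed

definition hankel_det2 :: "real \<Rightarrow> real \<Rightarrow> real \<Rightarrow> real" where
  "hankel_det2 x\<^sub>0 x\<^sub>1 x\<^sub>2 = x\<^sub>0 * x\<^sub>2 - x\<^sub>1\<^sup>2"

definition hankel_det3 :: "real \<Rightarrow> real \<Rightarrow> real \<Rightarrow> real \<Rightarrow> real \<Rightarrow> real" where
  "hankel_det3 x\<^sub>0 x\<^sub>1 x\<^sub>2 x\<^sub>3 x\<^sub>4 =
     x\<^sub>0 * x\<^sub>2 * x\<^sub>4 + 2 * x\<^sub>1 * x\<^sub>2 * x\<^sub>3 - x\<^sub>2 ^ 3 - x\<^sub>0 * x\<^sub>3\<^sup>2 - x\<^sub>1\<^sup>2 * x\<^sub>4"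

lemma hankel_dets_pos_of_pos_definite:
  fixes m\<^sub>0 m\<^sub>1 m\<^sub>2 m\<^sub>3 m\<^sub>4 :: real
  assumes pos_def: "\<And>\<alpha> \<beta> \<gamma>. (\<alpha>, \<beta>, \<gamma>) \<noteq> (0, 0, 0) \<Longrightarrow>
    0 < \<alpha>\<^sup>2 * m\<^sub>0 + 2 * \<alpha> * \<beta> * m\<^sub>1 + (\<beta>\<^sup>2 + 2 * \<alpha> * \<gamma>) * m\<^sub>2 + 2 * \<beta> * \<gamma> * m\<^sub>3 + \<gamma>\<^sup>2 * m\<^sub>4"
  shows "m\<^sub>0 > 0" and "hankel_det2 m\<^sub>0 m\<^sub>1 m\<^sub>2 > 0" and "hankel_det3 m\<^sub>0 m\<^sub>1 m\<^sub>2 m\<^sub>3 m\<^sub>4 > 0"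
proof -
  define q where "q = hankel_det2 m\<^sub>0 m\<^sub>1 m\<^sub>2"
  define q' where "q' = m\<^sub>0 * m\<^sub>3 - m\<^sub>1 * m\<^sub>2"
  show m0: "m\<^sub>0 > 0"
    using pos_def[of 1 0 0] by simp
  have "0 < (- m\<^sub>1)\<^sup>2 * m\<^sub>0 + 2 * (- m\<^sub>1) * m\<^sub>0 * m\<^sub>1 + m\<^sub>0\<^sup>2 * m\<^sub>2"
    using pos_def[of "- m\<^sub>1" m\<^sub>0 0] m0 by simp
  also have "\<dots> = m\<^sub>0 * q"
    unfolding q_def hankel_det2_def by (simp add: power2_eq_square algebra_simps)
  finally show det2_pos: "hankel_det2 m\<^sub>0 m\<^sub>1 m\<^sub>2 > 0"
    using m0 unfolding q_def by (simp add: zero_less_mult_iff)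
  \<comment> \<open>This vector is orthogonal to the first two rows of the Hankel matrix, so the form
    is its last entry q * m0 times its product with the last row, which is m0 times the determinant.\<close>
  have "0 < (q' * m\<^sub>1 - q * m\<^sub>2)\<^sup>2 * m\<^sub>0 + 2 * (q' * m\<^sub>1 - q * m\<^sub>2) * (- q' * m\<^sub>0) * m\<^sub>1
      + ((- q' * m\<^sub>0)\<^sup>2 + 2 * (q' * m\<^sub>1 - q * m\<^sub>2) * (q * m\<^sub>0)) * m\<^sub>2
      + 2 * (- q' * m\<^sub>0) * (q * m\<^sub>0) * m\<^sub>3 + (q * m\<^sub>0)\<^sup>2 * m\<^sub>4"
    using m0 det2_pos unfolding q_def by (intro pos_def) simp
  also have "\<dots> = m\<^sub>0\<^sup>2 * q * hankel_det3 m\<^sub>0 m\<^sub>1 m\<^sub>2 m\<^sub>3 m\<^sub>4"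
    unfolding q_def q'_def hankel_det2_def hankel_det3_def
    by (simp add: power2_eq_square power3_eq_cube algebra_simps)
  finally have "0 < (m\<^sub>0\<^sup>2 * q) * hankel_det3 m\<^sub>0 m\<^sub>1 m\<^sub>2 m\<^sub>3 m\<^sub>4" .
  moreover have "0 < m\<^sub>0\<^sup>2 * q"
    using m0 det2_pos unfolding q_def by simp
  ultimately show "hankel_det3 m\<^sub>0 m\<^sub>1 m\<^sub>2 m\<^sub>3 m\<^sub>4 > 0"
    by (rule zero_less_mult_pos)
qed

lemma hankel_det3_of_recurrence:
  assumes m2: "m\<^sub>2 = s * m\<^sub>1 + \<nu> * m\<^sub>0" and m3: "m\<^sub>3 = s * m\<^sub>2 + (\<nu> + 1) * m\<^sub>1"
    and m4: "m\<^sub>4 = s * m\<^sub>3 + (\<nu> + 2) * m\<^sub>2" and m5: "m\<^sub>5 = s * m\<^sub>4 + (\<nu> + 3) * m\<^sub>3"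
  shows "hankel_det3 m\<^sub>0 m\<^sub>1 m\<^sub>2 m\<^sub>3 m\<^sub>4 = hankel_det2 m\<^sub>0 m\<^sub>1 m\<^sub>2 * m\<^sub>2 - m\<^sub>0 * hankel_det2 m\<^sub>1 m\<^sub>2 m\<^sub>3"
    and "hankel_det3 m\<^sub>1 m\<^sub>2 m\<^sub>3 m\<^sub>4 m\<^sub>5 =
      (2 * \<nu> + 2) * m\<^sub>1 * hankel_det2 m\<^sub>1 m\<^sub>2 m\<^sub>3 - \<nu> * m\<^sub>2 * (m\<^sub>0 * m\<^sub>3 - m\<^sub>1 * m\<^sub>2)"
  unfolding hankel_det2_def hankel_det3_def m5 m4 m3 m2
  by (simp_all add: power2_eq_square power3_eq_cube algebra_simps)

lemma recurrent_moments_inequality: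
  fixes m :: "nat \<Rightarrow> real" and \<nu> :: real
  assumes "\<nu> > 0" and recurrence: "\<And>k. m (k + 2) = s * m (k + 1) + (\<nu> + real k) * m k"
    and "hankel_det2 (m 0) (m 1) (m 2) > 0" "hankel_det2 (m 1) (m 2) (m 3) > 0"
    and "hankel_det3 (m 0) (m 1) (m 2) (m 3) (m 4) > 0" "hankel_det3 (m 1) (m 2) (m 3) (m 4) (m 5) > 0"
    and "B * hankel_det2 (m 1) (m 2) (m 3) + (m 0 * m 3 - m 1 * m 2) \<ge> 0"
  shows "m 0 * (B * hankel_det2 (m 1) (m 2) (m 3) + (m 0 * m 3 - m 1 * m 2))
    < hankel_det2 (m 0) (m 1) (m 2) * ((2 + 2 / \<nu>) * m 1 + B * m 2)"
proof -
  let ?D = "B * hankel_det2 (m 1) (m 2) (m 3) + (m 0 * m 3 - m 1 * m 2)"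
  let ?N = "hankel_det2 (m 0) (m 1) (m 2) * ((2 + 2 / \<nu>) * m 1 + B * m 2)"
  have "m 2 = s * m 1 + \<nu> * m 0" "m 3 = s * m 2 + (\<nu> + 1) * m 1"
    "m 4 = s * m 3 + (\<nu> + 2) * m 2" "m 5 = s * m 4 + (\<nu> + 3) * m 3"
    using recurrence[of 0] recurrence[of 1] recurrence[of 2] recurrence[of 3]
    by (simp_all add: numeral_eq_Suc)
  note det3 = hankel_det3_of_recurrence[OF this]
  have "hankel_det2 (m 1) (m 2) (m 3) * (?N - m 0 * ?D) =
      hankel_det2 (m 0) (m 1) (m 2) * hankel_det3 (m 1) (m 2) (m 3) (m 4) (m 5) / \<nu>
      + hankel_det3 (m 0) (m 1) (m 2) (m 3) (m 4) * ?D"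
    unfolding det3 using \<open>\<nu> > 0\<close> by (simp add: field_simps)
  also have "\<dots> > 0"
    using assms(1,3-) by (intro add_pos_nonneg divide_pos_pos mult_pos_pos mult_nonneg_nonneg) auto
  finally show ?thesis
    using \<open>hankel_det2 (m 1) (m 2) (m 3) > 0\<close> by (simp add: zero_less_mult_iff)
qed

definition pcf_weight :: "real \<Rightarrow> real \<Rightarrow> real \<Rightarrow> real" where
  "pcf_weight a b t = t powr a * exp (b * t - t\<^sup>2 / 2)"

(* For a > -1: D_(-a-1)(-b) = exp (- b^2/4) * pcf_moment a b / Gamma (a + 1). *)
definition pcf_moment :: "real \<Rightarrow> real \<Rightarrow> real" where
  "pcf_moment a b = (LINT t:{0<..}|lborel. pcf_weight a b t)"

lemma pcf_weight_pos: "t > 0 \<Longrightarrow> pcf_weight a b t > 0"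
  unfolding pcf_weight_def by simp

lemma pcf_weight_add_nat: "t > 0 \<Longrightarrow> pcf_weight (a + real k) b t = t ^ k * pcf_weight a b t"
  unfolding pcf_weight_def by (simp add: powr_add powr_realpow)

lemma borel_measurable_pcf_weight [measurable]: "pcf_weight a b \<in> borel_measurable borel"
  unfolding pcf_weight_def by measurable

lemma pcf_weight_le:
  assumes "t > 0"
  shows "pcf_weight a b t \<le> exp ((b + 1)\<^sup>2 / 2) * (t powr a / exp t)"
proof -
  have "b * t - t\<^sup>2 / 2 \<le> (b + 1)\<^sup>2 / 2 - t"
    using zero_le_power2[of "t - (b + 1)"] by (simp add: power2_eq_square algebra_simps)
  then have "exp (b * t - t\<^sup>2 / 2) \<le> exp ((b + 1)\<^sup>2 / 2) / exp t"
    by (simp add: exp_diff[symmetric])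
  then have "t powr a * exp (b * t - t\<^sup>2 / 2) \<le> t powr a * (exp ((b + 1)\<^sup>2 / 2) / exp t)"
    by (rule mult_left_mono) simp
  then show ?thesis
    unfolding pcf_weight_def by (simp add: mult_ac)
qed

lemma set_integrable_pcf_weight:
  assumes "a > -1"
  shows "set_integrable lborel {0<..} (pcf_weight a b)"
proof (rule set_integrable_bound)
  show "set_integrable lborel {0<..} (\<lambda>t. exp ((b + 1)\<^sup>2 / 2) * (t powr a / exp t))"
    using set_integrable_powr_divide_exp[OF assms] by (rule set_integrable_mult_right)
  show "set_borel_measurable lborel {0<..} (pcf_weight a b)"
    unfolding set_borel_measurable_def by measurable
  show "AE t in lborel. t \<in> {0<..} \<longrightarrow>
      norm (pcf_weight a b t) \<le> norm (exp ((b + 1)\<^sup>2 / 2) * (t powr a / exp t))"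
    using pcf_weight_le pcf_weight_pos by (auto simp: less_imp_le)
qed

lemma has_real_derivative_pcf_weight:
  assumes "t > 0"
  shows "((\<lambda>b. pcf_weight a b t) has_real_derivative pcf_weight (a + 1) b t) (at b)"
proof -
  have "((\<lambda>b. pcf_weight a b t) has_real_derivative t powr a * (exp (b * t - t\<^sup>2 / 2) * t)) (at b)"
    unfolding pcf_weight_def by (auto intro!: derivative_eq_intros)
  then show ?thesis
    using assms by (simp add: pcf_weight_def powr_add mult_ac)
qed

lemma pcf_weight_diff_le:
  assumes "t > 0" "\<bar>h\<bar> \<le> 1"
  shows "\<bar>pcf_weight a (b + h) t - pcf_weight a b t\<bar> \<le> \<bar>h\<bar> * pcf_weight (a + 1) (b + 1) t"
proof -
  have "\<bar>exp (h * t) - 1\<bar> \<le> \<bar>h * t\<bar> * exp \<bar>h * t\<bar>"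
    by (rule abs_exp_minus_one_le)
  also have "\<dots> \<le> \<bar>h\<bar> * t * exp t"
    using assms by (intro mult_mono) (auto simp: abs_mult mult_le_cancel_right1)
  finally have exp_bound: "\<bar>exp (h * t) - 1\<bar> \<le> \<bar>h\<bar> * t * exp t" .
  have "exp ((b + h) * t - t\<^sup>2 / 2) = exp (b * t - t\<^sup>2 / 2) * exp (h * t)"
    by (simp add: exp_add[symmetric] algebra_simps)
  then have "pcf_weight a (b + h) t - pcf_weight a b t = pcf_weight a b t * (exp (h * t) - 1)"
    unfolding pcf_weight_def by (simp add: algebra_simps)
  then have "\<bar>pcf_weight a (b + h) t - pcf_weight a b t\<bar> =
      pcf_weight a b t * \<bar>exp (h * t) - 1\<bar>"
    using pcf_weight_pos[OF assms(1), of a b] by (simp add: abs_mult)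
  also have "\<dots> \<le> pcf_weight a b t * (\<bar>h\<bar> * t * exp t)"
    using exp_bound pcf_weight_pos[OF assms(1)] by (simp add: mult_left_mono)
  also have "\<dots> = \<bar>h\<bar> * pcf_weight (a + 1) (b + 1) t"
    using assms(1) by (simp add: pcf_weight_def powr_add exp_add[symmetric] algebra_simps)
  finally show ?thesis .
qed

lemma pcf_moment_eq_integral:
  "pcf_moment a b = integral\<^sup>L lborel (\<lambda>t. indicator {0<..} t * pcf_weight a b t)"
  unfolding pcf_moment_def set_lebesgue_integral_def by simp

lemma has_real_derivative_pcf_moment:
  assumes "a > -1"
  shows "(pcf_moment a has_real_derivative pcf_moment (a + 1) b) (at b)"
  unfolding pcf_moment_eq_integral[abs_def] pcf_moment_eq_integral
proof (rule has_real_derivative_lebesgue_integral)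
  show "integrable lborel (\<lambda>t. indicator {0<..} t * pcf_weight a b' t)" for b'
    using set_integrable_pcf_weight[OF assms] unfolding set_integrable_def by simp
  show "integrable lborel (\<lambda>t. indicator {0<..} t * pcf_weight (a + 1) (b + 1) t)"
    using set_integrable_pcf_weight[of "a + 1"] assms unfolding set_integrable_def by simp
  show "((\<lambda>b. indicator {0<..} t * pcf_weight a b t) has_real_derivative
      indicator {0<..} t * pcf_weight (a + 1) b t) (at b)" for t
    by (cases "t > 0") (auto intro: has_real_derivative_pcf_weight)
  show "\<bar>indicator {0<..} t * pcf_weight a (b + h) t - indicator {0<..} t * pcf_weight a b t\<bar>
      \<le> \<bar>h\<bar> * (indicator {0<..} t * pcf_weight (a + 1) (b + 1) t)" if "\<bar>h\<bar> \<le> 1" for t h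
    using pcf_weight_diff_le[of t h a b] that by (cases "t > 0") auto
qed

lemma pcf_weight_tendsto_at_top: "(pcf_weight a b \<longlongrightarrow> 0) at_top"
  unfolding pcf_weight_def by real_asymp

lemma pcf_weight_tendsto_at_right_0:
  assumes "a > 0"
  shows "(pcf_weight a b \<longlongrightarrow> 0) (at_right 0)"
proof -
  have "((\<lambda>t. t powr a * exp (b * t - t\<^sup>2 / 2)) \<longlongrightarrow> 0 * exp (b * 0 - 0\<^sup>2 / 2)) (at_right 0)"
    using assms
    by (intro tendsto_intros tendsto_powr'[where a = 0, simplified])
      (auto intro: tendsto_intros simp: eventually_at_right_field)
  then show ?thesis
    unfolding pcf_weight_def by simp
qed

lemma pcf_moment_recurrence:
  assumes "a > 0"
  shows "pcf_moment (a + 1) b = b * pcf_moment a b + a * pcf_moment (a - 1) b"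
proof -
  define f where "f t = a * pcf_weight (a - 1) b t + b * pcf_weight a b t - pcf_weight (a + 1) b t" for t
  have integrable: "set_integrable lborel {0<..} (pcf_weight a' b)" if "a' \<in> {a - 1, a, a + 1}" for a'
    using that assms by (intro set_integrable_pcf_weight) auto
  have "(LBINT t=0..\<infinity>. f t) = 0 - 0"
  proof (rule interval_integral_FTC_integrable[where F = "pcf_weight a b"])
    fix t :: real
    assume "0 < ereal t" "ereal t < \<infinity>"
    then have t: "t > 0" by simp
    have "((\<lambda>t. t powr a * exp (b * t - t\<^sup>2 / 2)) has_real_derivative
        a * t powr (a - 1) * exp (b * t - t\<^sup>2 / 2) + t powr a * (exp (b * t - t\<^sup>2 / 2) * (b - 2 * t / 2))) (at t)"
      using t by (auto intro!: derivative_eq_intros)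
    moreover have "a * t powr (a - 1) * exp (b * t - t\<^sup>2 / 2)
        + t powr a * (exp (b * t - t\<^sup>2 / 2) * (b - 2 * t / 2)) = f t"
      unfolding f_def pcf_weight_def using t by (simp add: powr_add algebra_simps)
    ultimately show "(pcf_weight a b has_vector_derivative f t) (at t)"
      unfolding pcf_weight_def[abs_def] by (simp add: has_real_derivative_iff_has_vector_derivative)
    show "isCont f t"
      unfolding f_def pcf_weight_def using t by (intro continuous_intros) auto
  next
    show "set_integrable lborel (einterval 0 \<infinity>) f"
      unfolding f_def using integrable
      by (simp add: zero_ereal_def set_integral_diff set_integral_add set_integrable_mult_right)
    show "((pcf_weight a b \<circ> real_of_ereal) \<longlongrightarrow> 0) (at_right 0)"
      using pcf_weight_tendsto_at_right_0[OF assms, of b] by (simp add: zero_ereal_def ereal_tendsto_simps)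
    show "((pcf_weight a b \<circ> real_of_ereal) \<longlongrightarrow> 0) (at_left \<infinity>)"
      using pcf_weight_tendsto_at_top[of a b] by (simp add: ereal_tendsto_simps)
  qed simp
  then have "(LINT t:{0<..}|lborel. f t) = 0"
    by (simp add: interval_lebesgue_integral_def zero_ereal_def)
  moreover have "(LINT t:{0<..}|lborel. f t) = a * pcf_moment (a - 1) b + b * pcf_moment a b - pcf_moment (a + 1) b"
    unfolding f_def pcf_moment_def using integrable
    by (simp add: set_integral_diff set_integral_add set_integrable_mult_right)
  ultimately show ?thesis by simp
qed

lemma pcf_moment_nat_recurrence:
  assumes "a > -1" and m_def: "m = (\<lambda>k::nat. pcf_moment (a + real k) b)"
  shows "m (k + 2) = b * m (k + 1) + (a + 1 + real k) * m k"
  using pcf_moment_recurrence[of "a + 1 + real k" b] assms(1)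
  unfolding m_def by (simp add: algebra_simps)

lemma pcf_moment_quadratic_form_pos:
  fixes \<alpha> \<beta> \<gamma> :: real
  assumes "a > -1" and "(\<alpha>, \<beta>, \<gamma>) \<noteq> (0, 0, 0)"
  shows "0 < \<alpha>\<^sup>2 * pcf_moment a b + 2 * \<alpha> * \<beta> * pcf_moment (a + 1) b
    + (\<beta>\<^sup>2 + 2 * \<alpha> * \<gamma>) * pcf_moment (a + 2) b + 2 * \<beta> * \<gamma> * pcf_moment (a + 3) b
    + \<gamma>\<^sup>2 * pcf_moment (a + 4) b"
proof -
  define p where "p t = \<alpha> + \<beta> * t + \<gamma> * t\<^sup>2" for t :: real
  define F where "F k t = indicator {0<..} t * pcf_weight (a + real k) b t" for k t
  define g where "g t = indicator {0<..} t * ((p t)\<^sup>2 * pcf_weight a b t)" for t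
  have F_integrable: "integrable lborel (F k)" for k
    using set_integrable_pcf_weight[of "a + real k" b] assms(1)
    unfolding F_def set_integrable_def by simp
  have F_integral: "integral\<^sup>L lborel (F k) = pcf_moment (a + real k) b" for k
    unfolding F_def pcf_moment_eq_integral ..
  have g_eq: "g = (\<lambda>t. \<alpha>\<^sup>2 * F 0 t + 2 * \<alpha> * \<beta> * F 1 t + (\<beta>\<^sup>2 + 2 * \<alpha> * \<gamma>) * F 2 t
      + 2 * \<beta> * \<gamma> * F 3 t + \<gamma>\<^sup>2 * F 4 t)"
  proof
    fix t :: real
    show "g t = \<alpha>\<^sup>2 * F 0 t + 2 * \<alpha> * \<beta> * F 1 t + (\<beta>\<^sup>2 + 2 * \<alpha> * \<gamma>) * F 2 t
      + 2 * \<beta> * \<gamma> * F 3 t + \<gamma>\<^sup>2 * F 4 t"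
    proof (cases "t > 0")
      case True
      then show ?thesis
        using pcf_weight_add_nat[OF True, of a 1 b] pcf_weight_add_nat[OF True, of a 2 b]
          pcf_weight_add_nat[OF True, of a 3 b] pcf_weight_add_nat[OF True, of a 4 b]
        unfolding g_def F_def p_def
        by (simp add: power2_eq_square power3_eq_cube power4_eq_xxxx algebra_simps)
    qed (simp add: g_def F_def)
  qed
  have "finite {t. p t = 0}"
  proof -
    have "[:\<alpha>, \<beta>, \<gamma>:] \<noteq> 0" using assms(2) by auto
    moreover have "poly [:\<alpha>, \<beta>, \<gamma>:] t = p t" for t
      unfolding p_def by (simp add: algebra_simps power2_eq_square)
    ultimately show ?thesis
      using poly_roots_finite[of "[:\<alpha>, \<beta>, \<gamma>:]"] by simp
  qed
  then have "AE t in lborel. t \<notin> {t. p t = 0}"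
    by (intro AE_not_in finite_imp_null_set_lborel)
  then have "AE t in lborel. t \<in> {0<..<1} \<longrightarrow> 0 < g t"
    by eventually_elim (simp add: g_def pcf_weight_pos)
  moreover have "integrable lborel g"
    unfolding g_eq using F_integrable by simp
  moreover have "AE t in lborel. 0 \<le> g t"
    using pcf_weight_pos by (intro AE_I2) (simp add: g_def indicator_def less_imp_le)
  ultimately have "0 < integral\<^sup>L lborel g"
    by (intro integral_pos_of_AE_pos[where A = "{0<..<1}"]) simp_all
  also have "integral\<^sup>L lborel g = \<alpha>\<^sup>2 * pcf_moment a b + 2 * \<alpha> * \<beta> * pcf_moment (a + 1) b
    + (\<beta>\<^sup>2 + 2 * \<alpha> * \<gamma>) * pcf_moment (a + 2) b + 2 * \<beta> * \<gamma> * pcf_moment (a + 3) b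
    + \<gamma>\<^sup>2 * pcf_moment (a + 4) b"
    using F_integral[of 0] F_integral[of 1] F_integral[of 2] F_integral[of 3] F_integral[of 4]
    unfolding g_eq by (simp add: F_integrable)
  finally show ?thesis .
qed

lemma pcf_moment_hankel_dets_pos:
  assumes "a > -1" and m_def: "m = (\<lambda>k::nat. pcf_moment (a + real k) b)"
  shows "m 0 > 0"
    and "hankel_det2 (m 0) (m 1) (m 2) > 0" "hankel_det2 (m 1) (m 2) (m 3) > 0"
    and "hankel_det3 (m 0) (m 1) (m 2) (m 3) (m 4) > 0" "hankel_det3 (m 1) (m 2) (m 3) (m 4) (m 5) > 0"
proof -
  note pos_def = hankel_dets_pos_of_pos_definite[OF pcf_moment_quadratic_form_pos]
  have "m k = pcf_moment (a + real k) b" "m (k + 1) = pcf_moment ((a + 1) + real k) b" for k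
    unfolding m_def by (simp_all add: algebra_simps)
  then show "m 0 > 0"
    and "hankel_det2 (m 0) (m 1) (m 2) > 0" "hankel_det2 (m 1) (m 2) (m 3) > 0"
    and "hankel_det3 (m 0) (m 1) (m 2) (m 3) (m 4) > 0" "hankel_det3 (m 1) (m 2) (m 3) (m 4) (m 5) > 0"
    using pos_def[of a] pos_def[of "a + 1"] assms(1) by (simp_all add: algebra_simps)
qed

lemma psi_eq_pcf_moment:
  assumes "\<kappa> > 0" and "\<sigma> > 0"
  shows "psi \<mu> \<kappa> \<sigma> \<rho> x =
    pcf_moment (\<rho> / \<kappa> - 1) (sqrt (2 * \<kappa>) / \<sigma> * (x - \<mu>)) / Gamma (\<rho> / \<kappa>)"
proof -
  define u where "u = - (x - \<mu>) / \<sigma> * sqrt (2 * \<kappa>)"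
  have "u\<^sup>2 = (x - \<mu>)\<^sup>2 / \<sigma>\<^sup>2 * (2 * \<kappa>)"
    unfolding u_def using assms by (simp add: power_mult_distrib power_divide power2_commute)
  then have "u\<^sup>2 / 4 = \<kappa> * (x - \<mu>)\<^sup>2 / (2 * \<sigma>\<^sup>2)"
    by simp
  then have exp_cancel: "exp (\<kappa> * (x - \<mu>)\<^sup>2 / (2 * \<sigma>\<^sup>2)) * exp (- (u\<^sup>2) / 4) = 1"
    by (simp add: exp_minus[symmetric] exp_add[symmetric])
  have integrand: "(\<lambda>t. t powr (- (- \<rho> / \<kappa>) - 1) * exp (- (t\<^sup>2) / 2 - u * t)) =
      pcf_weight (\<rho> / \<kappa> - 1) (sqrt (2 * \<kappa>) / \<sigma> * (x - \<mu>))"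
    using assms by (intro ext) (simp add: pcf_weight_def u_def field_simps)
  have "psi \<mu> \<kappa> \<sigma> \<rho> x = exp (\<kappa> * (x - \<mu>)\<^sup>2 / (2 * \<sigma>\<^sup>2)) * (exp (- (u\<^sup>2) / 4) / Gamma (\<rho> / \<kappa>) *
      (LINT t:{0<..}|lborel. t powr (- (- \<rho> / \<kappa>) - 1) * exp (- (t\<^sup>2) / 2 - u * t)))"
    unfolding psi_def parcyl_def u_def by simp
  also have "\<dots> = pcf_moment (\<rho> / \<kappa> - 1) (sqrt (2 * \<kappa>) / \<sigma> * (x - \<mu>)) / Gamma (\<rho> / \<kappa>)"
    unfolding integrand pcf_moment_def[symmetric] using exp_cancel by (simp add: field_simps)
  finally show ?thesis .
qed

lemma psid_eq_pcf_moment: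
  assumes "\<kappa> > 0" and "\<sigma> > 0" and "\<rho> > 0"
  shows "psid \<mu> \<kappa> \<sigma> \<rho> n = (\<lambda>x. (sqrt (2 * \<kappa>) / \<sigma>) ^ n *
    pcf_moment (\<rho> / \<kappa> - 1 + real n) (sqrt (2 * \<kappa>) / \<sigma> * (x - \<mu>)) / Gamma (\<rho> / \<kappa>))"
proof (induction n)
  case 0
  show ?case
    unfolding psid_def using psi_eq_pcf_moment[OF assms(1,2)] by auto
next
  case (Suc n)
  define L where "L = sqrt (2 * \<kappa>) / \<sigma>"
  define a where "a = \<rho> / \<kappa> - 1 + real n"
  have "a > -1"
    unfolding a_def using assms by (simp add: add_pos_nonneg)
  have Gamma_pos: "Gamma (\<rho> / \<kappa>) > 0"
    using assms by (intro Gamma_real_pos divide_pos_pos)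
  have "(psid \<mu> \<kappa> \<sigma> \<rho> n has_real_derivative
      L ^ Suc n * pcf_moment (a + 1) (L * (x - \<mu>)) / Gamma (\<rho> / \<kappa>)) (at x)" for x
  proof -
    have "((\<lambda>x. pcf_moment a (L * (x - \<mu>))) has_real_derivative
        pcf_moment (a + 1) (L * (x - \<mu>)) * L) (at x)"
      by (rule DERIV_chain2[OF has_real_derivative_pcf_moment[OF \<open>a > -1\<close>]])
        (auto intro!: derivative_eq_intros)
    then show ?thesis
      unfolding Suc.IH L_def[symmetric] a_def[symmetric] using Gamma_pos
      by (auto intro!: derivative_eq_intros simp: algebra_simps)
  qed
  then have "psid \<mu> \<kappa> \<sigma> \<rho> (Suc n) =
      (\<lambda>x. L ^ Suc n * pcf_moment (a + 1) (L * (x - \<mu>)) / Gamma (\<rho> / \<kappa>))"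
    unfolding psid_def by (auto intro!: DERIV_imp_deriv)
  then show ?case
    unfolding L_def a_def by (simp add: algebra_simps)
qed

lemma DD_NN_eq_pcf_moments:
  fixes \<mu> \<kappa> \<sigma> \<rho> \<beta> c y z :: real
  assumes "\<kappa> > 0" and "\<sigma> > 0" and "\<rho> > 0"
    and L_def: "L = sqrt (2 * \<kappa>) / \<sigma>"
    and m_def: "m = (\<lambda>k::nat. pcf_moment (\<rho> / \<kappa> - 1 + real k) (L * (z - \<mu>)))"
    and B_def: "B = (\<rho> + \<kappa>) * (c - Rt \<mu> \<kappa> \<rho> \<beta> z y) * L"
  shows "DD \<mu> \<kappa> \<sigma> \<rho> \<beta> c y z = (L / Gamma (\<rho> / \<kappa>)) ^ 3 *
      (m 0 * (B * hankel_det2 (m 1) (m 2) (m 3) + (m 0 * m 3 - m 1 * m 2)))"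
    and "NN \<mu> \<kappa> \<sigma> \<rho> \<beta> c y z = (L / Gamma (\<rho> / \<kappa>)) ^ 3 *
      (hankel_det2 (m 0) (m 1) (m 2) * ((2 + 2 / (\<rho> / \<kappa>)) * m 1 + B * m 2))"
proof -
  define u where "u = 1 / Gamma (\<rho> / \<kappa>)"
  have scale: "L / Gamma (\<rho> / \<kappa>) = L * u"
    unfolding u_def by simp
  have psid: "psid \<mu> \<kappa> \<sigma> \<rho> n z = L ^ n * u * m n" for n
    unfolding psid_eq_pcf_moment[OF assms(1-3)] L_def m_def u_def by simp
  have psi_z: "psi \<mu> \<kappa> \<sigma> \<rho> z = u * m 0" "psid \<mu> \<kappa> \<sigma> \<rho> 0 z = u * m 0"
    using psid[of 0] unfolding psid_def by simp_all
  have psid_z: "psid \<mu> \<kappa> \<sigma> \<rho> 1 z = L * u * m 1" "psid \<mu> \<kappa> \<sigma> \<rho> 2 z = L ^ 2 * u * m 2"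
    "psid \<mu> \<kappa> \<sigma> \<rho> 3 z = L ^ 3 * u * m 3"
    using psid[of 1] psid[of 2] psid[of 3] by simp_all
  have indices: "(1::nat) + 2 = 3" "(1::nat) + 1 = 2" "(0::nat) + 2 = 2" "(0::nat) + 1 = 1"
    by simp_all
  show "DD \<mu> \<kappa> \<sigma> \<rho> \<beta> c y z = (L / Gamma (\<rho> / \<kappa>)) ^ 3 *
      (m 0 * (B * hankel_det2 (m 1) (m 2) (m 3) + (m 0 * m 3 - m 1 * m 2)))"
    unfolding scale DD_def Qk_def Q0d_def hankel_det2_def indices psi_z psid_z B_def
    by (simp add: power2_eq_square power3_eq_cube algebra_simps)
  show "NN \<mu> \<kappa> \<sigma> \<rho> \<beta> c y z = (L / Gamma (\<rho> / \<kappa>)) ^ 3 *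
      (hankel_det2 (m 0) (m 1) (m 2) * ((2 + 2 / (\<rho> / \<kappa>)) * m 1 + B * m 2))"
    unfolding scale NN_def Qk_def hankel_det2_def indices psi_z psid_z B_def
    using assms by (simp add: power2_eq_square power3_eq_cube field_simps)
qed

theorem lemmaA2:
  fixes \<mu> \<kappa> \<sigma> \<rho> \<beta> c y z :: real
  assumes "\<kappa> > 0" and "\<sigma> > 0" and "\<rho> > 0" and "\<beta> > 0" and "c \<ge> 0"
    and "DD \<mu> \<kappa> \<sigma> \<rho> \<beta> c y z \<ge> 0"
  shows "NN \<mu> \<kappa> \<sigma> \<rho> \<beta> c y z > DD \<mu> \<kappa> \<sigma> \<rho> \<beta> c y z"
proof -
  define L where "L = sqrt (2 * \<kappa>) / \<sigma>"
  define m where "m = (\<lambda>k::nat. pcf_moment (\<rho> / \<kappa> - 1 + real k) (L * (z - \<mu>)))"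
  define B where "B = (\<rho> + \<kappa>) * (c - Rt \<mu> \<kappa> \<rho> \<beta> z y) * L"
  note DD_NN = DD_NN_eq_pcf_moments[OF assms(1-3) L_def m_def B_def]
  have "\<rho> / \<kappa> - 1 > -1"
    using assms by simp
  note dets = pcf_moment_hankel_dets_pos[OF this m_def]
  have recurrence: "m (k + 2) = L * (z - \<mu>) * m (k + 1) + (\<rho> / \<kappa> + real k) * m k" for k
    using pcf_moment_nat_recurrence[OF \<open>\<rho> / \<kappa> - 1 > -1\<close> m_def] by simp
  have "\<rho> / \<kappa> > 0"
    using assms by simp
  have scale_pos: "(L / Gamma (\<rho> / \<kappa>)) ^ 3 > 0"
    using assms by (simp add: L_def Gamma_real_pos)
  then have "B * hankel_det2 (m 1) (m 2) (m 3) + (m 0 * m 3 - m 1 * m 2) \<ge> 0"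
    using assms(6) dets(1) unfolding DD_NN by (simp add: zero_le_mult_iff)
  from recurrent_moments_inequality[OF \<open>\<rho> / \<kappa> > 0\<close> recurrence dets(2-5) this] scale_pos
  show ?thesis
    unfolding DD_NN by simp
qed

end
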